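(* Let $Y$ be a Banach space with norm $\|\cdot\|_{y}$, $X\subset Y$ a non-empty set and $\mathcal{T}:X\rightarrow X$ a given operator. Define $X_{\infty}\subset Y$ as the set of all $U\in Y$ for which there exist a sequence $\{U^{k}\}\subset X$ and $V\in Y$ such that $U^{k}\rightarrow U$ and $\mathcal{T}(U^{k})\rightarrow V$ in $Y$. Assume: (i) $\mathcal{T}$ admits a well-defined extension $\widehat{\mathcal{T}}:X_{\infty}\rightarrow Y$ given by $\widehat{\mathcal{T}}(U)=V$, where $V$ is the limit in $Y$ of $\mathcal{T}(U^{k})$ for a sequence $\{U^{k}\}\subset X$ with $U^{k}\rightarrow U$ in $Y$; that is, $V$ is independent of the sequence in $X$ converging to $U$; (ii) there is a constant $0<\alpha_{0}<\frac{1}{2}$ such that for all $U_{1},U_{2}\in X$, $$\|\mathcal{T}^{2}(U_{2})-\mathcal{T}^{2}(U_{1})\|_{y}\leq\alpha_{0}\left\{\|\mathcal{T}(U_{2})-\mathcal{T}(U_{1})\|_{y}+\|U_{2}-U_{1}\|_{y}\right\}.$$ Then $\widehat{\mathcal{T}}(X_{\infty})\subseteq X_{\infty}$, $\widehat{\mathcal{T}}$ satisfies the inequality in (ii) for all $U_{1},U_{2}\in X_{\infty}$, and there is a unique $U_{\infty}\in X_{\infty}$ with $\widehat{\mathcal{T}}(U_{\infty})=U_{\infty}$.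
   Context: This is an abstract metric fixed point theorem; the iteration inequality of type $a_{k}\leq\alpha_{0}(a_{k-1}+a_{k-2})$ with $0<\alpha_{0}<1/2$ implies $\sum_{k}a_{k}<\infty$. *)

theory Defs
  imports "HOL-Analysis.Analysis"
begin

definition X_inf :: "'a::banach set \<Rightarrow> ('a \<Rightarrow> 'a) \<Rightarrow> 'a set" where
  "X_inf X T = {U. \<exists>u V. (\<forall>k. u k \<in> X) \<and> u \<longlonglongrightarrow> U \<and> (\<lambda>k. T (u k)) \<longlonglongrightarrow> V}"

definition T_ext :: "'a::banach set \<Rightarrow> ('a \<Rightarrow> 'a) \<Rightarrow> 'a \<Rightarrow> 'a" where
  "T_ext X T U = (THE V. \<exists>u. (\<forall>k. u k \<in> X) \<and> u \<longlonglongrightarrow> U \<and> (\<lambda>k. T (u k)) \<longlonglongrightarrow> V)"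

end

theory Submission
  imports Defs
begin

text \<open>Passing to limits along sequences in \<open>X\<close> carries the two-step inequality over to
  \<open>X_inf X T\<close>; the inequality also makes \<open>T (T (u k))\<close> Cauchy whenever \<open>u k\<close> and \<open>T (u k)\<close>
  are, which is why \<open>T_ext\<close> maps \<open>X_inf X T\<close> into itself. For the Picard iterates
  \<open>x\<^sub>n = T\<^sup>n x\<^sub>0\<close> the steps \<open>a\<^sub>k = \<parallel>x\<^sub>k\<^sub>+\<^sub>1 - x\<^sub>k\<parallel>\<close> satisfy
  \<open>a\<^sub>k\<^sub>+\<^sub>2 \<le> \<alpha>\<^sub>0 (a\<^sub>k\<^sub>+\<^sub>1 + a\<^sub>k)\<close> and therefore decay like \<open>(\<alpha>\<^sub>0 + 1/2)\<^sup>k\<close>, so the iterates converge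
  to some \<open>L\<close> with \<open>T x\<^sub>n \<longrightarrow> L\<close>, i.e. \<open>T_ext X T L = L\<close>. Two fixed points \<open>U, W\<close> satisfy
  \<open>\<parallel>U - W\<parallel> \<le> 2 \<alpha>\<^sub>0 \<parallel>U - W\<parallel>\<close>, hence coincide.\<close>

lemma two_step_recurrence_geometric_bound:
  fixes a :: "nat \<Rightarrow> real" and \<alpha> :: real
  assumes nonneg: "\<And>k. a k \<ge> 0" and "0 \<le> \<alpha>" "\<alpha> < 1/2"
    and rec: "\<And>k. a (Suc (Suc k)) \<le> \<alpha> * (a (Suc k) + a k)"
  shows "a n \<le> max (a 0) (a 1 / (\<alpha> + 1/2)) * (\<alpha> + 1/2) ^ n"
proof -
  define r where "r = \<alpha> + 1/2"
  define M where "M = max (a 0) (a 1 / r)"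
  have r: "0 < r" using assms(2) by (simp add: r_def)
  \<comment> \<open>\<open>r\<close> is chosen so that \<open>r\<^sup>n\<close> is a supersolution of the recurrence.\<close>
  have ratio: "\<alpha> * (r + 1) \<le> r\<^sup>2"
  proof -
    have "r\<^sup>2 - \<alpha> * (r + 1) = (1/2 - \<alpha>) / 2"
      by (simp add: r_def power2_eq_square algebra_simps)
    with assms(3) show ?thesis by simp
  qed
  have "M \<ge> 0" using nonneg[of 0] by (simp add: M_def)
  have "a n \<le> M * r ^ n \<and> a (Suc n) \<le> M * r ^ Suc n"
  proof (induction n)
    case 0
    have "a 1 / r \<le> M" by (simp add: M_def)
    with r have "a 1 \<le> M * r" by (simp add: divide_le_eq mult.commute)
    then show ?case by (simp add: M_def)
  next
    case (Suc n)
    have "a (Suc (Suc n)) \<le> \<alpha> * (a (Suc n) + a n)" by (rule rec)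
    also have "\<dots> \<le> \<alpha> * (M * r ^ Suc n + M * r ^ n)"
      using Suc.IH assms(2) by (intro mult_left_mono) auto
    also have "\<dots> = M * r ^ n * (\<alpha> * (r + 1))" by (simp add: algebra_simps)
    also have "\<dots> \<le> M * r ^ n * r\<^sup>2"
      using ratio \<open>M \<ge> 0\<close> r by (intro mult_left_mono) auto
    also have "\<dots> = M * r ^ Suc (Suc n)" by (simp add: power2_eq_square)
    finally show ?case using Suc.IH by simp
  qed
  then show ?thesis by (simp add: M_def r_def)
qed

lemma summable_two_step_recurrence:
  fixes a :: "nat \<Rightarrow> real" and \<alpha> :: real
  assumes "\<And>k. a k \<ge> 0" and "0 \<le> \<alpha>" "\<alpha> < 1/2"
    and "\<And>k. a (Suc (Suc k)) \<le> \<alpha> * (a (Suc k) + a k)"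
  shows "summable a"
proof (rule summable_comparison_test')
  show "summable (\<lambda>n. max (a 0) (a 1 / (\<alpha> + 1/2)) * (\<alpha> + 1/2) ^ n)"
    using assms(2,3) by (intro summable_mult summable_geometric) auto
  show "norm (a n) \<le> max (a 0) (a 1 / (\<alpha> + 1/2)) * (\<alpha> + 1/2) ^ n" for n
    using two_step_recurrence_geometric_bound[of a, OF assms] assms(1) by simp
qed

lemma convergent_if_summable_norm_diff:
  fixes x :: "nat \<Rightarrow> 'a::banach"
  assumes "summable (\<lambda>k. norm (x (Suc k) - x k))"
  shows "convergent x"
proof -
  have "(\<lambda>n. \<Sum>k<n. x (Suc k) - x k) \<longlonglongrightarrow> (\<Sum>k. x (Suc k) - x k)"
    using summable_norm_cancel[OF assms] by (rule summable_LIMSEQ)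
  then have "(\<lambda>n. (x n - x 0) + x 0) \<longlonglongrightarrow> (\<Sum>k. x (Suc k) - x k) + x 0"
    by (intro tendsto_add) (simp_all add: sum_lessThan_telescope)
  then show ?thesis by (auto simp: convergent_def)
qed

lemma Cauchy_two_step_image:
  fixes T :: "'a::real_normed_vector \<Rightarrow> 'a" and \<alpha> :: real
  assumes "0 \<le> \<alpha>" and u: "\<forall>k. u k \<in> X"
    and two_step: "\<And>U1 U2. U1 \<in> X \<Longrightarrow> U2 \<in> X \<Longrightarrow>
              norm (T (T U2) - T (T U1)) \<le> \<alpha> * (norm (T U2 - T U1) + norm (U2 - U1))"
    and "Cauchy u" "Cauchy (\<lambda>k. T (u k))"
  shows "Cauchy (\<lambda>k. T (T (u k)))"
proof (rule metric_CauchyI)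
  fix e :: real assume "0 < e"
  define e' where "e' = e / (2 * \<alpha> + 1)"
  have "0 < e'" using \<open>0 < e\<close> assms(1) by (simp add: e'_def)
  obtain M1 where M1: "\<forall>m\<ge>M1. \<forall>n\<ge>M1. dist (u m) (u n) < e'"
    using \<open>Cauchy u\<close> \<open>0 < e'\<close> by (meson metric_CauchyD)
  obtain M2 where M2: "\<forall>m\<ge>M2. \<forall>n\<ge>M2. dist (T (u m)) (T (u n)) < e'"
    using \<open>Cauchy (\<lambda>k. T (u k))\<close> \<open>0 < e'\<close> by (meson metric_CauchyD)
  have "dist (T (T (u m))) (T (T (u n))) < e" if "max M1 M2 \<le> m" "max M1 M2 \<le> n" for m n
  proof -
    have "dist (T (T (u m))) (T (T (u n))) \<le> \<alpha> * (norm (T (u m) - T (u n)) + norm (u m - u n))"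
      using two_step u by (simp add: dist_norm)
    also have "\<dots> \<le> \<alpha> * (e' + e')"
      using M1 M2 that assms(1) by (intro mult_left_mono add_mono) (auto simp: dist_norm less_imp_le)
    also have "\<dots> = 2 * \<alpha> * e / (2 * \<alpha> + 1)" by (simp add: e'_def)
    also have "\<dots> < e"
      using \<open>0 < e\<close> assms(1) by (simp add: divide_less_eq)
    finally show ?thesis .
  qed
  then show "\<exists>M. \<forall>m\<ge>M. \<forall>n\<ge>M. dist (T (T (u m))) (T (T (u n))) < e" by blast
qed

locale closable_map =
  fixes X :: "'a::banach set" and T :: "'a \<Rightarrow> 'a"
  assumes limit_unique: "\<And>U u v V V'. (\<forall>k. u k \<in> X) \<Longrightarrow> (\<forall>k. v k \<in> X) \<Longrightarrow>
              u \<longlonglongrightarrow> U \<Longrightarrow> v \<longlonglongrightarrow> U \<Longrightarrow>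
              (\<lambda>k. T (u k)) \<longlonglongrightarrow> V \<Longrightarrow> (\<lambda>k. T (v k)) \<longlonglongrightarrow> V' \<Longrightarrow> V = V'"
begin

lemma T_ext_eqI:
  assumes "\<forall>k. u k \<in> X" "u \<longlonglongrightarrow> U" "(\<lambda>k. T (u k)) \<longlonglongrightarrow> V"
  shows "T_ext X T U = V"
  unfolding T_ext_def
proof (rule the_equality)
  show "\<exists>u. (\<forall>k. u k \<in> X) \<and> u \<longlonglongrightarrow> U \<and> (\<lambda>k. T (u k)) \<longlonglongrightarrow> V"
    using assms by blast
  fix V' assume "\<exists>v. (\<forall>k. v k \<in> X) \<and> v \<longlonglongrightarrow> U \<and> (\<lambda>k. T (v k)) \<longlonglongrightarrow> V'"
  then obtain v where v: "\<forall>k. v k \<in> X" "v \<longlonglongrightarrow> U" "(\<lambda>k. T (v k)) \<longlonglongrightarrow> V'" by blast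
  show "V' = V" by (rule limit_unique[OF v(1) assms(1) v(2) assms(2) v(3) assms(3)])
qed

lemma X_inf_memI:
  assumes "\<forall>k. u k \<in> X" "u \<longlonglongrightarrow> U" "(\<lambda>k. T (u k)) \<longlonglongrightarrow> V"
  shows "U \<in> X_inf X T"
  using assms unfolding X_inf_def by blast

lemma X_inf_memE:
  assumes "U \<in> X_inf X T"
  obtains u where "\<forall>k. u k \<in> X" "u \<longlonglongrightarrow> U" "(\<lambda>k. T (u k)) \<longlonglongrightarrow> T_ext X T U"
proof -
  obtain u V where u: "\<forall>k. u k \<in> X" "u \<longlonglongrightarrow> U" "(\<lambda>k. T (u k)) \<longlonglongrightarrow> V"
    using assms unfolding X_inf_def by blast
  with T_ext_eqI[OF u] show thesis using that by simp
qed

end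

locale two_step_contraction = closable_map +
  fixes \<alpha> :: real
  assumes self_map: "T ` X \<subseteq> X"
    and nonneg: "0 \<le> \<alpha>"
    and two_step: "\<And>U1 U2. U1 \<in> X \<Longrightarrow> U2 \<in> X \<Longrightarrow>
              norm (T (T U2) - T (T U1)) \<le> \<alpha> * (norm (T U2 - T U1) + norm (U2 - U1))"
begin

lemma T_ext_mem_and_tendsto:
  assumes u: "\<forall>k. u k \<in> X" "u \<longlonglongrightarrow> U" "(\<lambda>k. T (u k)) \<longlonglongrightarrow> T_ext X T U"
  shows "T_ext X T U \<in> X_inf X T"
    and "(\<lambda>k. T (T (u k))) \<longlonglongrightarrow> T_ext X T (T_ext X T U)"
proof -
  have Tu: "\<forall>k. T (u k) \<in> X" using u(1) self_map by blast
  have "Cauchy (\<lambda>k. T (T (u k)))"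
    by (rule Cauchy_two_step_image[OF nonneg u(1) two_step
          LIMSEQ_imp_Cauchy[OF u(2)] LIMSEQ_imp_Cauchy[OF u(3)]])
  then obtain W where W: "(\<lambda>k. T (T (u k))) \<longlonglongrightarrow> W"
    by (auto simp: Cauchy_convergent_iff convergent_def)
  show "T_ext X T U \<in> X_inf X T" by (rule X_inf_memI[OF Tu u(3) W])
  show "(\<lambda>k. T (T (u k))) \<longlonglongrightarrow> T_ext X T (T_ext X T U)"
    using W T_ext_eqI[OF Tu u(3) W] by simp
qed

lemma T_ext_image_subset: "T_ext X T ` X_inf X T \<subseteq> X_inf X T"
proof
  fix V assume "V \<in> T_ext X T ` X_inf X T"
  then obtain U where U: "U \<in> X_inf X T" and V: "V = T_ext X T U" by blast
  from U obtain u where "\<forall>k. u k \<in> X" "u \<longlonglongrightarrow> U" "(\<lambda>k. T (u k)) \<longlonglongrightarrow> T_ext X T U"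
    by (rule X_inf_memE)
  from T_ext_mem_and_tendsto(1)[OF this] show "V \<in> X_inf X T" by (simp add: V)
qed

lemma T_ext_two_step:
  assumes "U1 \<in> X_inf X T" "U2 \<in> X_inf X T"
  shows "norm (T_ext X T (T_ext X T U2) - T_ext X T (T_ext X T U1))
           \<le> \<alpha> * (norm (T_ext X T U2 - T_ext X T U1) + norm (U2 - U1))"
proof -
  obtain u where u: "\<forall>k. u k \<in> X" "u \<longlonglongrightarrow> U1" "(\<lambda>k. T (u k)) \<longlonglongrightarrow> T_ext X T U1"
    using assms(1) by (rule X_inf_memE)
  obtain v where v: "\<forall>k. v k \<in> X" "v \<longlonglongrightarrow> U2" "(\<lambda>k. T (v k)) \<longlonglongrightarrow> T_ext X T U2"
    using assms(2) by (rule X_inf_memE)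
  have "(\<lambda>k. norm (T (T (v k)) - T (T (u k))))
          \<longlonglongrightarrow> norm (T_ext X T (T_ext X T U2) - T_ext X T (T_ext X T U1))"
    using T_ext_mem_and_tendsto(2)[OF u] T_ext_mem_and_tendsto(2)[OF v] by (intro tendsto_intros)
  moreover have "(\<lambda>k. \<alpha> * (norm (T (v k) - T (u k)) + norm (v k - u k)))
          \<longlonglongrightarrow> \<alpha> * (norm (T_ext X T U2 - T_ext X T U1) + norm (U2 - U1))"
    using u v by (intro tendsto_intros)
  ultimately show ?thesis
    by (rule LIMSEQ_le) (use u v two_step in auto)
qed

lemma T_ext_fixed_point_unique:
  assumes "\<alpha> < 1/2"
    and "U \<in> X_inf X T" "T_ext X T U = U" "W \<in> X_inf X T" "T_ext X T W = W"
  shows "U = W"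
proof -
  have "norm (U - W) \<le> \<alpha> * (norm (U - W) + norm (U - W))"
    using T_ext_two_step[OF assms(4,2)] assms(3,5) by simp
  then have "(1 - 2 * \<alpha>) * norm (U - W) \<le> 0" by (simp add: algebra_simps)
  with assms(1) have "norm (U - W) \<le> 0" by (simp add: mult_le_0_iff)
  then show ?thesis by simp
qed

lemma T_ext_fixed_point_exists:
  assumes "\<alpha> < 1/2" and "x\<^sub>0 \<in> X"
  obtains L where "L \<in> X_inf X T" "T_ext X T L = L"
proof -
  define x where "x n = (T ^^ n) x\<^sub>0" for n
  have x: "x n \<in> X" for n
    using assms(2) self_map by (induction n) (auto simp: x_def)
  have x_Suc: "x (Suc n) = T (x n)" for n by (simp add: x_def)
  have "summable (\<lambda>k. norm (x (Suc k) - x k))"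
  proof (rule summable_two_step_recurrence[OF _ nonneg assms(1)])
    show "norm (x (Suc (Suc (Suc k))) - x (Suc (Suc k)))
            \<le> \<alpha> * (norm (x (Suc (Suc k)) - x (Suc k)) + norm (x (Suc k) - x k))" for k
      using two_step[OF x[of k] x[of "Suc k"]] by (simp only: x_Suc)
  qed simp
  then obtain L where L: "x \<longlonglongrightarrow> L"
    using convergent_if_summable_norm_diff by (auto simp: convergent_def)
  have TL: "(\<lambda>n. T (x n)) \<longlonglongrightarrow> L"
    using LIMSEQ_Suc[OF L] by (simp add: x_Suc)
  show ?thesis
  proof (rule that)
    show "L \<in> X_inf X T" using x L TL by (intro X_inf_memI) auto
    show "T_ext X T L = L" using x L TL by (intro T_ext_eqI) auto
  qed
qed

end

theorem theorem5p1:
  fixes X :: "'a::banach set" and T :: "'a \<Rightarrow> 'a" and \<alpha>\<^sub>0 :: real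
  assumes "X \<noteq> {}"
    and "T ` X \<subseteq> X"
    and wd: "\<And>U u v V V'. (\<forall>k. u k \<in> X) \<Longrightarrow> (\<forall>k. v k \<in> X) \<Longrightarrow>
              u \<longlonglongrightarrow> U \<Longrightarrow> v \<longlonglongrightarrow> U \<Longrightarrow>
              (\<lambda>k. T (u k)) \<longlonglongrightarrow> V \<Longrightarrow> (\<lambda>k. T (v k)) \<longlonglongrightarrow> V' \<Longrightarrow> V = V'"
    and "0 < \<alpha>\<^sub>0" and "\<alpha>\<^sub>0 < 1/2"
    and contr: "\<And>U1 U2. U1 \<in> X \<Longrightarrow> U2 \<in> X \<Longrightarrow>
              norm (T (T U2) - T (T U1)) \<le> \<alpha>\<^sub>0 * (norm (T U2 - T U1) + norm (U2 - U1))"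
  shows "T_ext X T ` X_inf X T \<subseteq> X_inf X T \<and>
     (\<forall>U1\<in>X_inf X T. \<forall>U2\<in>X_inf X T.
           norm (T_ext X T (T_ext X T U2) - T_ext X T (T_ext X T U1))
             \<le> \<alpha>\<^sub>0 * (norm (T_ext X T U2 - T_ext X T U1) + norm (U2 - U1))) \<and>
     (\<exists>!Uinf. Uinf \<in> X_inf X T \<and> T_ext X T Uinf = Uinf)"
proof -
  interpret two_step_contraction X T \<alpha>\<^sub>0
    by unfold_locales (use assms in auto)
  obtain x\<^sub>0 where "x\<^sub>0 \<in> X" using \<open>X \<noteq> {}\<close> by blast
  obtain L where "L \<in> X_inf X T" "T_ext X T L = L"
    using T_ext_fixed_point_exists[OF \<open>\<alpha>\<^sub>0 < 1/2\<close> \<open>x\<^sub>0 \<in> X\<close>] .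
  then have "\<exists>!Uinf. Uinf \<in> X_inf X T \<and> T_ext X T Uinf = Uinf"
    using T_ext_fixed_point_unique[OF \<open>\<alpha>\<^sub>0 < 1/2\<close>] by blast
  then show ?thesis
    using T_ext_image_subset T_ext_two_step by blast
qed

end
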